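(* Let $f\in\mathcal O_{\mathbb C^3,0}$, let $F_n$ be a compact two-dimensional face of $\Gamma_+(f)$ and $F_{n'}$ another two-dimensional face (compact or not) with $F_n\cap F_{n'}=[p_1,p_2]$ an edge of $F_n$. Let $q_1,q_2$ be the integral points of $\partial F_n$ such that $[p_1,q_1]$ and $[p_2,q_2]$ are the primitive segments of $\partial F_n$ adjacent to $[p_1,p_2]$ (i.e. lying on the other edges of $F_n$ through $p_1$, resp. $p_2$), and set $\alpha_1=\ell_{n'}(q_1-p_1)$, $\alpha_2=\ell_{n'}(q_2-p_2)$. If $p_1$ is a regular vertex of $F_n$, then $\alpha_{n,n'}=\alpha_1$ and $\alpha_1\mid\alpha_2$.
   Context: $\Gamma_+(f)=\operatorname{conv}\bigcup_{p\in\operatorname{supp}f}(p+\mathbb R^3_{\ge0})$. For a two-dimensional face $F_m$ of $\Gamma_+(f)$, $\ell_m$ is the primitive integral linear function on $\mathbb R^3$ whose minimal set on $\Gamma_+(f)$ is $F_m$. $\alpha_{n,n'}$ is the content (gcd of coordinates) of the cross product $\ell_n\times\ell_{n'}$ of the coefficient vectors. The face $F_n$ is regarded as an integral polygon in the affine plane $H$ containing it with lattice $H\cap\mathbb Z^3$; a vertex is regular if the primitive lattice vectors along its two edges form a basis of that lattice; a segment is primitive if its endpoints are lattice points and it contains no other lattice point. *)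

theory Defs
  imports "HOL-Analysis.Analysis"
begin

type_synonym germ3 = "nat \<times> nat \<times> nat \<Rightarrow> complex"
type_synonym ivec3 = "int \<times> int \<times> int"

text \<open>A germ in O_{C^3,0} is given by its Taylor coefficients f(a,b,c) (coefficient of
  x^a y^b z^c), subject to convergence on some polydisc.\<close>
definition convergent_germ :: "germ3 \<Rightarrow> bool" where
  "convergent_germ f \<longleftrightarrow>
     (\<exists>r::real. r > 0 \<and> (\<lambda>(a,b,c). norm (f (a,b,c)) * r ^ (a+b+c)) summable_on UNIV)"

definition supp :: "germ3 \<Rightarrow> (nat \<times> nat \<times> nat) set" where
  "supp f = {p. f p \<noteq> 0}"

definition pt :: "nat \<times> nat \<times> nat \<Rightarrow> real^3" where
  "pt p = (case p of (a,b,c) \<Rightarrow> vector [real a, real b, real c])"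

definition newton_poly :: "germ3 \<Rightarrow> (real^3) set" where
  "newton_poly f = convex hull (\<Union>p\<in>supp f. {x. \<forall>i. pt p $ i \<le> x $ i})"

definition integral_pt :: "real^3 \<Rightarrow> bool" where
  "integral_pt x \<longleftrightarrow> (\<forall>i. x $ i \<in> \<int>)"

definition lin :: "ivec3 \<Rightarrow> real^3 \<Rightarrow> real" where
  "lin l x = (case l of (a,b,c) \<Rightarrow> of_int a * x$1 + of_int b * x$2 + of_int c * x$3)"

definition content :: "ivec3 \<Rightarrow> int" where
  "content l = (case l of (a,b,c) \<Rightarrow> gcd (gcd a b) c)"

definition cross_i :: "ivec3 \<Rightarrow> ivec3 \<Rightarrow> ivec3" where
  "cross_i l m = (case l of (a1,a2,a3) \<Rightarrow> case m of (b1,b2,b3) \<Rightarrow>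
      (a2*b3 - a3*b2, a3*b1 - a1*b3, a1*b2 - a2*b1))"

definition prim_normal :: "(real^3) set \<Rightarrow> (real^3) set \<Rightarrow> ivec3 \<Rightarrow> bool" where
  "prim_normal G F l \<longleftrightarrow> content l = 1 \<and> F = {x\<in>G. \<forall>y\<in>G. lin l x \<le> lin l y}"

definition two_face :: "(real^3) set \<Rightarrow> (real^3) set \<Rightarrow> bool" where
  "two_face G F \<longleftrightarrow> F face_of G \<and> aff_dim F = 2"

definition is_edge :: "(real^3) set \<Rightarrow> (real^3) set \<Rightarrow> bool" where
  "is_edge E F \<longleftrightarrow> E face_of F \<and> aff_dim E = 1"

definition primitive_seg :: "real^3 \<Rightarrow> real^3 \<Rightarrow> bool" where
  "primitive_seg a b \<longleftrightarrow> integral_pt a \<and> integral_pt b \<and> a \<noteq> b \<and>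
     (\<forall>z\<in>closed_segment a b. integral_pt z \<longrightarrow> z = a \<or> z = b)"

definition regular_vertex :: "(real^3) set \<Rightarrow> real^3 \<Rightarrow> bool" where
  "regular_vertex F v \<longleftrightarrow> v extreme_point_of F \<and> integral_pt v \<and>
     (\<forall>E E' w w'. is_edge E F \<and> is_edge E' F \<and> E \<noteq> E' \<and> v \<in> E \<and> v \<in> E' \<and>
        w \<in> E \<and> w' \<in> E' \<and> primitive_seg v w \<and> primitive_seg v w' \<longrightarrow>
        (\<forall>z\<in>affine hull F. integral_pt z \<longrightarrow>
           (\<exists>a b::int. z - v = of_int a *\<^sub>R (w - v) + of_int b *\<^sub>R (w' - v))))"

end

theory Submission
  imports Defs
begin

text \<open>Let u be the primitive lattice vector along the edge [p1,p2] and w = q1 - p1.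
  Regularity of p1 says that w and u form a basis of the lattice of integral vectors
  orthogonal to ln; since ln is primitive, this forces w \<times> u = \<plusminus>ln.  As ln' vanishes
  on u, the vector triple product gives ln \<times> ln' = \<plusminus>ln'(w) u, whose content is
  ln'(w) = \<alpha>1 because u is primitive.  Finally q2 - p2 lies in the same lattice, so it
  equals a w + b u and \<alpha>2 = a \<alpha>1.\<close>

definition dot_i :: "ivec3 \<Rightarrow> ivec3 \<Rightarrow> int" where
  "dot_i u v = (case u of (a1,a2,a3) \<Rightarrow> case v of (b1,b2,b3) \<Rightarrow> a1*b1 + a2*b2 + a3*b3)"

definition iscale :: "int \<Rightarrow> ivec3 \<Rightarrow> ivec3" where
  "iscale k v = (case v of (a1,a2,a3) \<Rightarrow> (k*a1, k*a2, k*a3))"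

lemma dot_i_Pair [simp]: "dot_i (a1,a2,a3) (b1,b2,b3) = a1*b1 + a2*b2 + a3*b3"
  by (simp add: dot_i_def)

lemma iscale_Pair [simp]: "iscale k (a1,a2,a3) = (k*a1, k*a2, k*a3)"
  by (simp add: iscale_def)

lemma cross_i_Pair [simp]:
  "cross_i (a1,a2,a3) (b1,b2,b3) = (a2*b3 - a3*b2, a3*b1 - a1*b3, a1*b2 - a2*b1)"
  by (simp add: cross_i_def)

lemma content_Pair [simp]: "content (a1,a2,a3) = gcd (gcd a1 a2) a3"
  by (simp add: content_def)

lemma dot_i_commute: "dot_i u v = dot_i v u"
  by (cases u; cases v) (simp add: algebra_simps)

lemma dot_i_lin_comb: "dot_i l (iscale a u + iscale b v) = a * dot_i l u + b * dot_i l v"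
  by (cases l; cases u; cases v) (simp add: algebra_simps)

lemma dot_i_cross_i_self: "dot_i l (cross_i l a) = 0"
  by (cases l; cases a) (simp add: algebra_simps)

lemma cross_i_iscale_left: "cross_i (iscale k u) v = iscale k (cross_i u v)"
  by (cases u; cases v) (simp add: algebra_simps)

lemma cross_i_lin_comb:
  "cross_i (iscale a e + iscale b w) (iscale c e + iscale d w) = iscale (a*d - b*c) (cross_i e w)"
  by (cases e; cases w) (simp add: algebra_simps)

lemma cross_i_cross_i:
  "cross_i (cross_i u v) m = iscale (dot_i u m) v - iscale (dot_i v m) u"
  by (cases u; cases v; cases m) (simp add: algebra_simps)

lemma cross_i_cross_i_common:
  "cross_i (cross_i l a) (cross_i l b) = iscale (dot_i l (cross_i a b)) l"
  by (cases l; cases a; cases b) (simp add: algebra_simps)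

lemma content_iscale: "content (iscale k v) = \<bar>k\<bar> * content v"
proof (cases v)
  case (fields a b c)
  have "gcd (gcd (k*a) (k*b)) (k*c) = gcd \<bar>k * gcd a b\<bar> (k*c)"
    by (simp add: gcd_mult_distrib_int abs_mult)
  also have "\<dots> = \<bar>k\<bar> * gcd (gcd a b) c"
    by (simp only: gcd_abs1_int gcd_mult_distrib_int)
  finally show ?thesis using fields by simp
qed

lemma content_bezout:
  assumes "content l = 1"
  obtains c where "dot_i c l = 1"
proof (cases l)
  case (fields l1 l2 l3)
  obtain x y where xy: "x * l1 + y * l2 = gcd l1 l2"
    using bezout_int[of l1 l2] by auto
  obtain s t where st: "s * gcd l1 l2 + t * l3 = 1"
    using bezout_int[of "gcd l1 l2" l3] assms fields by auto
  have "dot_i (s*x, s*y, t) l = 1"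
    using fields st by (simp add: algebra_simps flip: xy)
  then show ?thesis by (rule that)
qed

lemma cross_i_of_lattice_basis:
  assumes "content l = 1"
    and basis: "\<And>z. dot_i l z = 0 \<Longrightarrow> \<exists>a b. z = iscale a e + iscale b w"
  obtains N where "\<bar>N\<bar> = 1" and "l = iscale N (cross_i e w)"
proof -
  \<comment> \<open>l \<times> a and l \<times> b lie in the lattice and (l \<times> a) \<times> (l \<times> b) = (l \<bullet> (a \<times> b)) l; for
    coordinate vectors a, b this puts each l_i l in \<int>(e \<times> w), and a Bezout combination
    of the l_i recovers l itself.\<close>
  have multiple: "\<exists>n. iscale (dot_i l (cross_i a b)) l = iscale n (cross_i e w)" for a b
  proof -
    obtain a1 b1 where "cross_i l a = iscale a1 e + iscale b1 w"
      using basis dot_i_cross_i_self by blast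
    moreover obtain a2 b2 where "cross_i l b = iscale a2 e + iscale b2 w"
      using basis dot_i_cross_i_self by blast
    ultimately show ?thesis
      using cross_i_cross_i_common[of l a b] cross_i_lin_comb by metis
  qed
  obtain l1 l2 l3 where l: "l = (l1, l2, l3)" by (cases l)
  obtain v1 v2 v3 where v: "cross_i e w = (v1, v2, v3)" by (cases "cross_i e w")
  obtain n1 where n1: "iscale l1 l = iscale n1 (cross_i e w)"
    using multiple[of "(0,1,0)" "(0,0,1)"] l by auto
  obtain n2 where n2: "iscale l2 l = iscale n2 (cross_i e w)"
    using multiple[of "(0,0,1)" "(1,0,0)"] l by auto
  obtain n3 where n3: "iscale l3 l = iscale n3 (cross_i e w)"
    using multiple[of "(1,0,0)" "(0,1,0)"] l by auto
  obtain c where c: "dot_i c l = 1" using content_bezout[OF assms(1)] .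
  obtain c1 c2 c3 where c123: "c = (c1, c2, c3)" by (cases c)
  define N where "N = c1 * n1 + c2 * n2 + c3 * n3"
  have "l = iscale (dot_i c l) l" using c by (simp add: l)
  also have "\<dots> = iscale N (cross_i e w)"
    using n1 n2 n3 unfolding N_def l v c123 by (simp add: algebra_simps)
  finally have lN: "l = iscale N (cross_i e w)" .
  then have "\<bar>N\<bar> * content (cross_i e w) = 1"
    using assms(1) content_iscale by metis
  then have "\<bar>N\<bar> = 1" using pos_zmult_eq_1_iff_lemma by fastforce
  with lN that show ?thesis by blast
qed

lemma content_cross_i_normals:
  assumes "content l = 1"
    and basis: "\<And>z. dot_i l z = 0 \<Longrightarrow> \<exists>a b. z = iscale a w + iscale b e"
    and "dot_i m e = 0" and "content e = 1"
  shows "content (cross_i l m) = \<bar>dot_i m w\<bar>"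
proof -
  obtain N where N: "\<bar>N\<bar> = 1" and lN: "l = iscale N (cross_i w e)"
    using cross_i_of_lattice_basis[OF assms(1) basis] by blast
  have "cross_i l m = iscale N (iscale (dot_i w m) e - iscale (dot_i e m) w)"
    by (simp add: lN cross_i_iscale_left cross_i_cross_i)
  also have "\<dots> = iscale (N * dot_i m w) e"
    using assms(3) by (cases e; cases w) (simp add: dot_i_commute algebra_simps)
  finally show ?thesis
    using N assms(4) by (simp add: content_iscale abs_mult)
qed

definition of_ivec :: "ivec3 \<Rightarrow> real^3" where
  "of_ivec v = (case v of (a1,a2,a3) \<Rightarrow> vector [of_int a1, of_int a2, of_int a3])"

lemma of_ivec_nth [simp]:
  "of_ivec (a1,a2,a3) $ 1 = of_int a1" "of_ivec (a1,a2,a3) $ 2 = of_int a2"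
  "of_ivec (a1,a2,a3) $ 3 = of_int a3"
  by (simp_all add: of_ivec_def)

lemma lin_eq_inner: "lin l x = of_ivec l \<bullet> x"
  by (cases l) (simp add: lin_def inner_vec_def sum_3)

lemma lin_of_ivec [simp]: "lin l (of_ivec v) = of_int (dot_i l v)"
  by (cases l; cases v) (simp add: lin_def)

lemma of_ivec_add: "of_ivec (u + v) = of_ivec u + of_ivec v"
  by (cases u; cases v) (simp add: vec_eq_iff forall_3)

lemma of_ivec_iscale: "of_ivec (iscale k v) = of_int k *\<^sub>R of_ivec v"
  by (cases v) (simp add: vec_eq_iff forall_3)

lemma of_ivec_eq_iff [simp]: "of_ivec u = of_ivec v \<longleftrightarrow> u = v"
  by (cases u; cases v) (simp add: vec_eq_iff forall_3)

lemma of_ivec_eq_0_iff [simp]: "of_ivec v = 0 \<longleftrightarrow> v = 0"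
  by (cases v) (simp add: vec_eq_iff forall_3 zero_prod_def)

lemma of_ivec_zero [simp]: "of_ivec 0 = 0"
  by simp

lemma integral_pt_iff_of_ivec: "integral_pt x \<longleftrightarrow> x \<in> range of_ivec"
proof
  assume "integral_pt x"
  then have floor_eq: "of_int \<lfloor>x$i\<rfloor> = x$i" for i
    unfolding integral_pt_def by (metis Ints_cases floor_of_int)
  have "x = of_ivec (\<lfloor>x$1\<rfloor>, \<lfloor>x$2\<rfloor>, \<lfloor>x$3\<rfloor>)"
    by (simp add: vec_eq_iff forall_3 floor_eq)
  then show "x \<in> range of_ivec" by blast
next
  assume "x \<in> range of_ivec"
  then show "integral_pt x"
    by (auto simp: integral_pt_def forall_3 split: prod.splits)
qed

lemma integral_pt_diff_of_ivec:
  assumes "integral_pt x" "integral_pt y"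
  obtains v where "x - y = of_ivec v"
proof -
  obtain u u' where "x = of_ivec u" "y = of_ivec u'"
    using assms by (auto simp: integral_pt_iff_of_ivec)
  then have "x - y = of_ivec (u - u')"
    using of_ivec_add[of "u - u'" u'] by simp
  then show ?thesis by (rule that)
qed

lemma integral_pt_add_of_ivec:
  assumes "integral_pt x" shows "integral_pt (x + of_ivec v)"
proof -
  obtain u where "x = of_ivec u" using assms by (auto simp: integral_pt_iff_of_ivec)
  then have "x + of_ivec v = of_ivec (u + v)" by (simp add: of_ivec_add)
  then show ?thesis by (simp add: integral_pt_iff_of_ivec)
qed

lemma lin_scaleR: "lin l (t *\<^sub>R x) = t * lin l x"
  by (simp add: lin_eq_inner)

lemma lin_diff: "lin l (x - y) = lin l x - lin l y"
  by (simp add: lin_eq_inner inner_diff_right)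

lemma content_eq_0_iff: "content v = 0 \<longleftrightarrow> v = 0"
  by (cases v) (simp add: zero_prod_def)

lemma primitive_seg_of_ivec:
  assumes p: "integral_pt p" and u: "content u = 1"
  shows "primitive_seg p (p + of_ivec u)"
  unfolding primitive_seg_def
proof (intro conjI ballI impI)
  show "integral_pt p" by (rule p)
  show "integral_pt (p + of_ivec u)" using p by (rule integral_pt_add_of_ivec)
  have "u \<noteq> 0" using u by (metis content_eq_0_iff zero_neq_one)
  then show "p \<noteq> p + of_ivec u" by simp
next
  fix z assume z: "z \<in> closed_segment p (p + of_ivec u)" and "integral_pt z"
  then obtain t where t: "0 \<le> t" "t \<le> 1"
    and "z = (1 - t) *\<^sub>R p + t *\<^sub>R (p + of_ivec u)"
    unfolding in_segment by blast
  then have zt: "z = p + t *\<^sub>R of_ivec u" by (simp add: algebra_simps)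
  obtain y where y: "z - p = of_ivec y"
    using integral_pt_diff_of_ivec[OF \<open>integral_pt z\<close> p] .
  obtain c where c: "dot_i c u = 1" using content_bezout[OF u] .
  \<comment> \<open>pairing with a Bezout vector of u shows that the parameter t is an integer\<close>
  have "t = lin c (t *\<^sub>R of_ivec u)" by (simp add: lin_scaleR c)
  also have "\<dots> = of_int (dot_i c y)" using y zt by simp
  finally have "t \<in> \<int>" by simp
  with t have "t = 0 \<or> t = 1"
    by (elim Ints_cases) auto
  then show "z = p \<or> z = p + of_ivec u" using zt by auto
qed

lemma primitive_seg_in_segment:
  assumes p: "integral_pt p" and q: "integral_pt q" and "p \<noteq> q"
  obtains u where "p + of_ivec u \<in> closed_segment p q" "primitive_seg p (p + of_ivec u)"
    "content u = 1"
proof -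
  obtain v where v: "q - p = of_ivec v" using integral_pt_diff_of_ivec[OF q p] .
  obtain v1 v2 v3 where v123: "v = (v1, v2, v3)" by (cases v)
  define k where "k = content v"
  have "v \<noteq> 0" using v \<open>p \<noteq> q\<close> by auto
  then have "k > 0"
    unfolding k_def using content_eq_0_iff[of v] by (simp add: v123 order_less_le)
  define u where "u = (v1 div k, v2 div k, v3 div k)"
  have "k dvd v1" "k dvd v2" "k dvd v3"
    unfolding k_def v123 by (auto intro: dvd_trans)
  then have vu: "v = iscale k u"
    unfolding u_def v123 by simp
  have "\<bar>k\<bar> * content u = k" using content_iscale[of k u] vu k_def by metis
  then have cu: "content u = 1" using \<open>k > 0\<close> by simp
  have "q - p = of_int k *\<^sub>R of_ivec u" using v vu by (simp add: of_ivec_iscale)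
  then have "of_ivec u = (1 / of_int k) *\<^sub>R (q - p)" using \<open>k > 0\<close> by simp
  then have "p + of_ivec u = (1 - 1 / of_int k) *\<^sub>R p + (1 / of_int k) *\<^sub>R q"
    by (simp add: algebra_simps)
  moreover have "0 \<le> 1 / real_of_int k" "1 / real_of_int k \<le> 1" using \<open>k > 0\<close> by simp_all
  ultimately have "p + of_ivec u \<in> closed_segment p q"
    unfolding in_segment by blast
  with primitive_seg_of_ivec[OF p cu] cu that show ?thesis by blast
qed

lemma lin_add_of_ivec: "lin l (x + of_ivec v) = lin l x + of_int (dot_i l v)"
  using lin_of_ivec[of l v] by (simp add: lin_eq_inner inner_add_right)

lemma prim_normal_subset: "prim_normal G F l \<Longrightarrow> F \<subseteq> G"
  by (auto simp: prim_normal_def)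

lemma prim_normal_le:
  "prim_normal G F l \<Longrightarrow> x \<in> F \<Longrightarrow> y \<in> G \<Longrightarrow> lin l x \<le> lin l y"
  by (auto simp: prim_normal_def)

lemma prim_normal_lin_eq:
  assumes "prim_normal G F l" "x \<in> F" "y \<in> F"
  shows "lin l x = lin l y"
  using assms prim_normal_le prim_normal_subset by (metis antisym subsetD)

lemma prim_normal_dot_i_eq_0:
  assumes "prim_normal G F l" "x \<in> F" "y \<in> F" "y - x = of_ivec v"
  shows "dot_i l v = 0"
  using prim_normal_lin_eq[OF assms(1-3)] lin_diff[of l y x] assms(4) by simp

lemma prim_normal_dot_i_nonneg:
  assumes "prim_normal G F l" "x \<in> F" "y \<in> G" "y - x = of_ivec v"
  shows "0 \<le> dot_i l v"
  using prim_normal_le[OF assms(1-3)] lin_diff[of l y x] assms(4) by simp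

lemma affine_hull_prim_normal:
  assumes l: "prim_normal G F l" and "aff_dim F = 2" and "v \<in> F"
  shows "affine hull F = {x. lin l x = lin l v}"
proof (rule affine_dim_equal)
  show "affine (affine hull F)" by (rule affine_affine_hull)
  show "affine hull F \<noteq> {}" using \<open>v \<in> F\<close> by auto
  show hyp: "affine {x. lin l x = lin l v}"
    unfolding lin_eq_inner by (rule affine_hyperplane)
  have "F \<subseteq> {x. lin l x = lin l v}"
    using prim_normal_lin_eq[OF l _ \<open>v \<in> F\<close>] by blast
  then show "affine hull F \<subseteq> {x. lin l x = lin l v}"
    using hyp by (rule hull_minimal)
  have "content l = 1" using l by (simp add: prim_normal_def)
  then have "of_ivec l \<noteq> 0" by (metis content_eq_0_iff of_ivec_eq_0_iff zero_neq_one)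
  then have "aff_dim {x. of_ivec l \<bullet> x = lin l v} = 2"
    using aff_dim_hyperplane by fastforce
  then have "aff_dim {x. lin l x = lin l v} = 2"
    by (simp only: lin_eq_inner)
  then show "aff_dim (affine hull F) = aff_dim {x. lin l x = lin l v}"
    using \<open>aff_dim F = 2\<close> by simp
qed

lemma edge_of_face_Int:
  assumes "F face_of G" "F' face_of G" "F \<inter> F' = closed_segment a b" "a \<noteq> b"
  shows "is_edge (closed_segment a b) F"
proof -
  have "(F \<inter> F') face_of F"
    using assms(1,2) by (meson face_of_Int face_of_imp_subset face_of_subset inf_le1)
  moreover have "aff_dim (closed_segment a b) = 1"
    using \<open>a \<noteq> b\<close> by (simp add: aff_dim_affine_hull2[OF affine_hull_closed_segment])
  ultimately show ?thesis using assms(3) by (simp add: is_edge_def)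
qed

lemma regular_vertex_lattice_basis:
  assumes reg: "regular_vertex F v" and l: "prim_normal G F l" and "aff_dim F = 2"
    and "is_edge E F" "is_edge E' F" "E \<noteq> E'" "v \<in> E" "v \<in> E'"
    and "v + of_ivec w \<in> E" "v + of_ivec w' \<in> E'"
    and "primitive_seg v (v + of_ivec w)" "primitive_seg v (v + of_ivec w')"
    and "dot_i l z = 0"
  shows "\<exists>a b. z = iscale a w + iscale b w'"
proof -
  have "v \<in> F" and "integral_pt v"
    using reg by (simp_all add: regular_vertex_def extreme_point_of_def)
  have "v + of_ivec z \<in> affine hull F"
    using affine_hull_prim_normal[OF l \<open>aff_dim F = 2\<close> \<open>v \<in> F\<close>] \<open>dot_i l z = 0\<close>
    by (simp add: lin_add_of_ivec)
  moreover have "integral_pt (v + of_ivec z)"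
    using \<open>integral_pt v\<close> by (rule integral_pt_add_of_ivec)
  ultimately obtain a b :: int
    where "of_ivec z = of_int a *\<^sub>R of_ivec w + of_int b *\<^sub>R of_ivec w'"
    using reg[unfolded regular_vertex_def, THEN conjunct2, THEN conjunct2, rule_format,
        of E E' "v + of_ivec w" "v + of_ivec w'" "v + of_ivec z"] assms(4-12)
    by auto
  then have "of_ivec z = of_ivec (iscale a w + iscale b w')"
    by (simp add: of_ivec_add of_ivec_iscale)
  then have "z = iscale a w + iscale b w'" by simp
  then show ?thesis by blast
qed

lemma regular_vertex_edge_basis:
  assumes "F face_of G" "aff_dim F = 2" "F' face_of G" "prim_normal G F l"
    and "F \<inter> F' = closed_segment p1 p2" "p1 \<noteq> p2" "integral_pt p2"
    and "is_edge E F" "E \<noteq> closed_segment p1 p2" "p1 \<in> E" "q \<in> E" "primitive_seg p1 q"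
    and "regular_vertex F p1"
  obtains u w where "p1 + of_ivec u \<in> closed_segment p1 p2" "content u = 1"
    and "q - p1 = of_ivec w"
    and "\<And>z. dot_i l z = 0 \<Longrightarrow> \<exists>a b. z = iscale a w + iscale b u"
proof -
  have "integral_pt p1" "integral_pt q"
    using assms(12) by (simp_all add: primitive_seg_def)
  obtain u where u: "p1 + of_ivec u \<in> closed_segment p1 p2"
    "primitive_seg p1 (p1 + of_ivec u)" "content u = 1"
    using primitive_seg_in_segment[OF \<open>integral_pt p1\<close> assms(7,6)] .
  obtain w where w: "q - p1 = of_ivec w"
    using integral_pt_diff_of_ivec[OF \<open>integral_pt q\<close> \<open>integral_pt p1\<close>] .
  have "p1 + of_ivec w = q" using w by (metis add.commute diff_add_cancel)
  then have q: "p1 + of_ivec w \<in> E" "primitive_seg p1 (p1 + of_ivec w)"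
    using assms(11,12) by simp_all
  show ?thesis
  proof (rule that[OF u(1,3) w])
    show "\<exists>a b. z = iscale a w + iscale b u" if "dot_i l z = 0" for z
      by (rule regular_vertex_lattice_basis[OF assms(13,4,2,8)
          edge_of_face_Int[OF assms(1,3,5,6)] assms(9,10) ends_in_segment(1)
          q(1) u(1) q(2) u(2) that])
  qed
qed

theorem mainTheorem13:
  fixes f :: germ3 and Fn Fn' :: "(real^3) set" and ln ln' :: ivec3
    and p1 p2 q1 q2 :: "real^3" and E1 E2 :: "(real^3) set"
  assumes "convergent_germ f"
    and "two_face (newton_poly f) Fn" and "compact Fn"
    and "two_face (newton_poly f) Fn'" and "Fn' \<noteq> Fn"
    and "prim_normal (newton_poly f) Fn ln"
    and "prim_normal (newton_poly f) Fn' ln'"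
    and "p1 \<noteq> p2" and "Fn \<inter> Fn' = closed_segment p1 p2"
    and "is_edge E1 Fn" and "E1 \<noteq> closed_segment p1 p2" and "p1 \<in> E1" and "q1 \<in> E1"
    and "primitive_seg p1 q1"
    and "is_edge E2 Fn" and "E2 \<noteq> closed_segment p1 p2" and "p2 \<in> E2" and "q2 \<in> E2"
    and "primitive_seg p2 q2"
    and "regular_vertex Fn p1"
  shows "real_of_int (content (cross_i ln ln')) = lin ln' (q1 - p1)
         \<and> (\<exists>k::int. lin ln' (q2 - p2) = of_int k * lin ln' (q1 - p1))"
proof -
  have faces: "Fn face_of newton_poly f" "aff_dim Fn = 2" "Fn' face_of newton_poly f"
    using assms(2,4) by (simp_all add: two_face_def)
  have p2: "integral_pt p2" "integral_pt q2" using assms(19) by (simp_all add: primitive_seg_def)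
  obtain u w where u: "p1 + of_ivec u \<in> closed_segment p1 p2" "content u = 1"
    and w: "q1 - p1 = of_ivec w"
    and basis: "\<And>z. dot_i ln z = 0 \<Longrightarrow> \<exists>a b. z = iscale a w + iscale b u"
    using regular_vertex_edge_basis[OF faces assms(6,9,8) p2(1) assms(10-14,20)] by blast
  have in_faces: "p1 \<in> Fn'" "p1 + of_ivec u \<in> Fn'" "p2 \<in> Fn" "q2 \<in> Fn" "q1 \<in> newton_poly f"
    using assms(9,10,13,15,18) u(1) prim_normal_subset[OF assms(6)]
    by (auto simp: is_edge_def dest: face_of_imp_subset)
  have "dot_i ln' u = 0"
    by (rule prim_normal_dot_i_eq_0[OF assms(7) in_faces(1,2)]) simp
  moreover have "0 \<le> dot_i ln' w"
    by (rule prim_normal_dot_i_nonneg[OF assms(7) in_faces(1,5) w])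
  moreover have "content ln = 1" using assms(6) by (simp add: prim_normal_def)
  ultimately have "content (cross_i ln ln') = dot_i ln' w"
    using content_cross_i_normals[OF _ basis] u(2) by simp
  obtain z where z: "q2 - p2 = of_ivec z" using integral_pt_diff_of_ivec[OF p2(2,1)] .
  then obtain a b where "z = iscale a w + iscale b u"
    using basis prim_normal_dot_i_eq_0[OF assms(6) in_faces(3,4)] by blast
  then have "dot_i ln' z = a * dot_i ln' w"
    using \<open>dot_i ln' u = 0\<close> by (simp add: dot_i_lin_comb)
  with \<open>content (cross_i ln ln') = dot_i ln' w\<close> show ?thesis using w z by simp
qed

end
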